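(* Fix an integer $d\ge 0$ and for $m\ge 0$ let $$a_m=\sum_{j=0}^{\lfloor (m+2)/2\rfloor} S(j,d,m+2-2j).$$ Then $a_0=d$, $a_1=d+1$, and $a_m=a_{m-1}+a_{m-2}$ for all $m\ge 2$ (so the sequence is $d,\ d+1,\ 2d+1,\ 3d+2,\ 5d+3,\ 8d+5,\dots$).
   Context: Binomial convention: for integers $M,m$, $\binom{M}{m}=\frac{M!}{m!(M-m)!}$ if $0\le m\le M$, and $\binom{M}{m}=0$ otherwise (in particular whenever $M<0$ or $m<0$ or $m>M$). For nonnegative integers $v,d,n$ the hypersolid number is defined by $$S(v,d,n)=\binom{v+n-2}{v-1}+d\binom{v+n-2}{v}.$$ *)

theory Defs
  imports Main
begin

definition binom :: "int \<Rightarrow> int \<Rightarrow> nat" where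
  "binom M m = (if 0 \<le> m \<and> m \<le> M then nat M choose nat m else 0)"

definition hypersolid :: "nat \<Rightarrow> nat \<Rightarrow> nat \<Rightarrow> nat" where
  "hypersolid v d n =
     binom (int v + int n - 2) (int v - 1) + d * binom (int v + int n - 2) (int v)"

end

theory Submission
  imports Defs "HOL-Number_Theory.Fib"
begin

(* The j-th hypersolid number in the sum for a_m is
     S(j, d, m+2-2j) = C(m-j, j-1) + d C(m-j, j),
   so a_m splits into two shallow diagonals of Pascal's triangle.  The diagonal
   sum  \<Sum>j. C(m-j, j)  is the Fibonacci number F(m+1) (library fact
   ne_diagonal_fib), and the shifted diagonal  \<Sum>j. C(m-j, j-1)  is F(m).
   Hence the closed form  a_m = F(m) + d F(m+1),  from which a_0 = d, a_1 = d+1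
   and the Fibonacci recurrence of a_m are immediate. *)

(* On the shallow diagonal, the integer binomial agrees with nat choose
   (with truncated subtraction): both vanish once j exceeds m - j. *)
lemma binom_diagonal: "binom (int m - int j) (int j) = (m - j) choose j"
proof -
  have "nat (int m - int j) = m - j"
    by simp
  then show ?thesis
    by (auto simp: binom_def)
qed

lemma sum_atLeast0_atMost_vanishing_tail:
  fixes f :: "nat \<Rightarrow> 'a :: comm_monoid_add"
  assumes "K \<le> N" and "\<And>j. K < j \<Longrightarrow> f j = 0"
  shows "(\<Sum>j = 0..N. f j) = (\<Sum>j = 0..K. f j)"
  using assms by (intro sum.mono_neutral_right) auto

(* The diagonal sum, truncated anywhere beyond its last nonzero term m div 2,
   is a Fibonacci number. *)
lemma diagonal_sum_fib:
  assumes "m div 2 \<le> N"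
  shows "(\<Sum>j = 0..N. binom (int m - int j) (int j)) = fib (Suc m)"
proof -
  have vanish: "(m - j) choose j = 0" if "m div 2 < j" for j
    using that by (simp add: binomial_eq_0)
  have "(\<Sum>j = 0..N. binom (int m - int j) (int j)) = (\<Sum>j = 0..N. (m - j) choose j)"
    by (simp add: binom_diagonal)
  also have "\<dots> = (\<Sum>j = 0..m div 2. (m - j) choose j)"
    using assms vanish by (rule sum_atLeast0_atMost_vanishing_tail)
  also have "\<dots> = (\<Sum>j = 0..m. (m - j) choose j)"
    using vanish by (intro sum_atLeast0_atMost_vanishing_tail[symmetric]) auto
  also have "\<dots> = fib (Suc m)"
    by (rule ne_diagonal_fib)
  finally show ?thesis .
qed

(* The diagonal shifted by one column sums to the previous Fibonacci number:
   dropping the vanishing j = 0 term and reindexing gives the diagonal of m - 1. *)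
lemma shifted_diagonal_sum_fib:
  assumes "(m + 1) div 2 \<le> N"
  shows "(\<Sum>j = 0..N. binom (int m - int j) (int j - 1)) = fib m"
proof (cases m)
  case 0
  then show ?thesis
    by (auto simp: binom_def)
next
  case (Suc n)
  then obtain N' where N: "N = Suc N'" and "n div 2 \<le> N'"
    using assms by (cases N) auto
  have "(\<Sum>j = 0..N. binom (int m - int j) (int j - 1))
      = binom (int m) (- 1) + (\<Sum>i = 0..N'. binom (int n - int i) (int i))"
    unfolding N Suc by (subst sum.atLeast0_atMost_Suc_shift) (simp add: algebra_simps)
  also have "\<dots> = fib (Suc n)"
    using diagonal_sum_fib[OF \<open>n div 2 \<le> N'\<close>] by (simp add: binom_def)
  finally show ?thesis
    using Suc by simp
qed

lemma hypersolid_as_diagonal: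
  assumes "2 * j \<le> m + 2"
  shows "hypersolid j d (m + 2 - 2 * j)
           = binom (int m - int j) (int j - 1) + d * binom (int m - int j) (int j)"
  using assms by (simp add: hypersolid_def of_nat_diff)

lemma hypersolid_diagonal_sum:
  "(\<Sum>j = 0..(m + 2) div 2. hypersolid j d (m + 2 - 2 * j)) = fib m + d * fib (Suc m)"
proof -
  let ?N = "(m + 2) div 2"
  have "(\<Sum>j = 0..?N. hypersolid j d (m + 2 - 2 * j))
      = (\<Sum>j = 0..?N. binom (int m - int j) (int j - 1) + d * binom (int m - int j) (int j))"
    by (intro sum.cong refl hypersolid_as_diagonal) auto
  also have "\<dots> = (\<Sum>j = 0..?N. binom (int m - int j) (int j - 1))
        + d * (\<Sum>j = 0..?N. binom (int m - int j) (int j))"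
    by (simp only: sum.distrib sum_distrib_left)
  also have "\<dots> = fib m + d * fib (Suc m)"
    using shifted_diagonal_sum_fib[of m ?N] diagonal_sum_fib[of m ?N] by simp
  finally show ?thesis .
qed

theorem corollary5:
  fixes d :: nat and a :: "nat \<Rightarrow> nat"
  assumes a_def: "\<And>m. a m = (\<Sum>j = 0..(m + 2) div 2. hypersolid j d (m + 2 - 2 * j))"
  shows "a 0 = d \<and> a 1 = d + 1 \<and> (\<forall>m\<ge>2. a m = a (m - 1) + a (m - 2))"
proof -
  have closed_form: "a m = fib m + d * fib (Suc m)" for m
    using a_def hypersolid_diagonal_sum by simp
  have fibonacci_step: "a (Suc (Suc k)) = a (Suc k) + a k" for k
    by (simp add: closed_form distrib_left)
  have "a m = a (m - 1) + a (m - 2)" if "m \<ge> 2" for m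
  proof -
    obtain k where "m = Suc (Suc k)"
      using \<open>m \<ge> 2\<close> by (metis add_2_eq_Suc le_Suc_ex)
    then show ?thesis
      using fibonacci_step by simp
  qed
  moreover have "a 0 = d" and "a 1 = d + 1"
    by (simp_all add: closed_form)
  ultimately show ?thesis
    by blast
qed

end
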